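(* Let $\mathbb{F}_q$ be a finite field. For all $u,v\in\mathbb{F}_q$ with $u^3\ne27$ and $v^3\ne27$, we have $E_{\mathrm{H},u}\cong_{\mathbb{F}_q}E_{\mathrm{H},v}$ if and only if there exist $\zeta_1,\zeta_2\in\mathbb{F}_q$ with $\zeta_1^3=\zeta_2^3=1$ such that either (1) $v=\zeta_1u$, or (2) $q\equiv1\pmod3$ and $v=\frac{3\zeta_1(u+6\zeta_2)}{u-3\zeta_2}$.
   Context: For $u\in\mathbb{F}_q$ with $u^3\ne27$, the Hessian curve $E_{\mathrm{H},u}$ is the elliptic curve $X^3+Y^3+1=uXY$ over $\mathbb{F}_q$. Two such curves are $\mathbb{F}_q$-isomorphic ($\cong_{\mathbb{F}_q}$) if they are birationally equivalent over $\mathbb{F}_q$, equivalently if their Weierstrass models are isomorphic via a Weierstrass change of variables $X\mapsto\alpha^2\tilde X+\beta$, $Y\mapsto\alpha^3\tilde Y+\alpha^2\gamma\tilde X+\delta$ with $\alpha,\beta,\gamma,\delta\in\mathbb{F}_q$, $\alpha\ne0$. *)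

theory Defs
  imports Main
begin

text \<open>A (long) Weierstrass equation
  Y^2 + a1 X Y + a3 Y = X^3 + a2 X^2 + a4 X + a6 is represented by its coefficient
  tuple (a1, a2, a3, a4, a6).\<close>

type_synonym 'a weier = "'a \<times> 'a \<times> 'a \<times> 'a \<times> 'a"

text \<open>Isomorphism of Weierstrass models over the base field via the change of variables
  X = alpha^2 X' + beta, Y = alpha^3 Y' + alpha^2 gamma X' + delta
  (alpha, beta, gamma, delta in the field, alpha nonzero); the transformed coefficients are
  given by the standard formulas (Silverman, Table 3.1, with u = alpha, r = beta,
  s = gamma, t = delta).\<close>

definition weier_iso :: "'a::field weier \<Rightarrow> 'a weier \<Rightarrow> bool" where
  "weier_iso E E' \<longleftrightarrow>
     (case E of (a1, a2, a3, a4, a6) \<Rightarrow> case E' of (b1, b2, b3, b4, b6) \<Rightarrow>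
       (\<exists>\<alpha> \<beta> \<gamma> \<delta>. \<alpha> \<noteq> 0 \<and>
          \<alpha> * b1 = a1 + 2 * \<gamma> \<and>
          \<alpha>^2 * b2 = a2 - \<gamma> * a1 + 3 * \<beta> - \<gamma>^2 \<and>
          \<alpha>^3 * b3 = a3 + \<beta> * a1 + 2 * \<delta> \<and>
          \<alpha>^4 * b4 = a4 - \<gamma> * a3 + 2 * \<beta> * a2 - (\<delta> + \<beta> * \<gamma>) * a1
                       + 3 * \<beta>^2 - 2 * \<gamma> * \<delta> \<and>
          \<alpha>^6 * b6 = a6 + \<beta> * a4 + \<beta>^2 * a2 + \<beta>^3 - \<delta> * a3 - \<delta>^2
                       - \<beta> * \<delta> * a1))"

text \<open>Weierstrass model of the Hessian curve X^3 + Y^3 + 1 = u X Y (u^3 \<noteq> 27):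
  Y^2 + (u+6) X Y + (u^2+3u+9) Y = X^3.  It is obtained, over the base field and in every
  characteristic, by the projective linear change of coordinates
  (X:Y:Z) \<mapsto> (X+Y+Z : u X + 3Y + 3Z : 3X + 3Y + u Z) (determinant -(u-3)^2) followed by a
  scaling; its discriminant is (u^3-27)^3.\<close>

definition hessian_weier :: "'a::field \<Rightarrow> 'a weier" where
  "hessian_weier u = (u + 6, 0, u^2 + 3 * u + 9, 0, 0)"

definition hessian_iso :: "'a::field \<Rightarrow> 'a \<Rightarrow> bool" where
  "hessian_iso u v \<longleftrightarrow> weier_iso (hessian_weier u) (hessian_weier v)"

end

theory Submission
  imports Defs "HOL-Computational_Algebra.Polynomial"
begin

(* Both Weierstrass models Y^2 + (u+6) XY + (u^2+3u+9) Y = X^3 are in Tate normal form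
   Y^2 + A XY + B Y = X^3, for which the isomorphism equations simplify (tate3_iso) and compose.

   Backward direction: u |-> zeta u is an isomorphism for every cube root of unity zeta, and,
   given a primitive cube root of unity w, x |-> 3w(x+6w^2)/(x-3w^2) is realised by a pure
   scaling; composing these yields all transformations of the second kind.

   Forward direction: if F_q contains a primitive cube root of unity, isomorphic curves have
   equal j-invariants, and this polynomial relation factors into the four admissible families.
   Otherwise (q = 2 mod 3, including characteristic 3) a direct analysis of the isomorphism
   equations shows u = v.

   Finally, F_q contains a primitive cube root of unity iff q = 1 mod 3; the main theorem
   follows by distinguishing these two cases. *)

lemma nontrivial_cube_root_iff:
  fixes z :: "'a::field"
  shows "z^3 = 1 \<and> z \<noteq> 1 \<longleftrightarrow> z^2 + z + 1 = 0 \<and> (3::'a) \<noteq> 0"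
proof
  assume z: "z^3 = 1 \<and> z \<noteq> 1"
  have "(z - 1) * (z^2 + z + 1) = z^3 - 1" by algebra
  then have "z^2 + z + 1 = 0" using z by simp
  moreover have "(3::'a) \<noteq> 0"
  proof
    assume three: "(3::'a) = 0"
    have "(z - 1)^3 = (z^3 - 1) - 3 * (z^2 - z)" by algebra
    also have "\<dots> = 0" using z three by simp
    finally show False using z by simp
  qed
  ultimately show "z^2 + z + 1 = 0 \<and> (3::'a) \<noteq> 0" by blast
next
  assume z: "z^2 + z + 1 = 0 \<and> (3::'a) \<noteq> 0"
  have "z^3 - 1 = (z - 1) * (z^2 + z + 1)" by algebra
  then have "z^3 = 1" using z by simp
  moreover have "z \<noteq> 1"
  proof
    assume "z = 1"
    then have "z^2 + z + 1 = 3" by simp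
    then show False using z by simp
  qed
  ultimately show "z^3 = 1 \<and> z \<noteq> 1" by blast
qed

lemma cubes_eq_imp_root_of_unity:
  fixes w X Y :: "'a::field"
  assumes w: "w^2 + w + 1 = 0" and "X^3 = Y^3"
  shows "\<exists>z. z^3 = 1 \<and> X = z * Y"
proof -
  have "(X - Y) * (X - w*Y) * (X - w^2*Y) = X^3 - Y^3" using w by algebra
  then have "X = Y \<or> X = w*Y \<or> X = w^2*Y" using \<open>X^3 = Y^3\<close> by simp
  moreover have "w^3 = 1" and "(w^2)^3 = 1" using w by algebra+
  ultimately show ?thesis by (metis power_one mult_1)
qed

lemma char_three_numerals:
  assumes "(3::'a::comm_ring_1) = 0"
  shows "(6::'a) = 0" and "(27::'a) = 0"
proof -
  have "(6::'a) = 2 * 3" and "(27::'a) = 9 * 3" by simp_all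
  then show "(6::'a) = 0" and "(27::'a) = 0" using assms by simp_all
qed

lemma hessian_denominator_ne:
  fixes u z :: "'a::field"
  assumes "u^3 \<noteq> 27" and "z^3 = 1"
  shows "u - 3*z \<noteq> 0"
proof
  assume "u - 3*z = 0"
  then have "u^3 = 27 * z^3" by (simp add: power_mult_distrib)
  with assms show False by simp
qed

text \<open>The coefficient u^2 + 3u + 9 of the Hessian model is nonzero, as it divides u^3 - 27.\<close>

lemma hessian_B_ne:
  fixes u :: "'a::field"
  assumes "u^3 \<noteq> 27"
  shows "u^2 + 3*u + 9 \<noteq> 0"
proof
  assume "u^2 + 3*u + 9 = 0"
  moreover have "u^3 - 27 = (u - 3) * (u^2 + 3*u + 9)" by algebra
  ultimately show False using assms by simp
qed

text \<open>Both Weierstrass models in question have the shape Y^2 + A XY + B Y = X^3, the Tate normal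
  form of a curve with a rational point of order 3.  Between two such models the equations of
  weier_iso simplify to the following conditions on the change of variables: one equation each
  for the coefficients a1 and a3, and the vanishing of the transformed a2, a4 and a6.\<close>

definition tate3_iso :: "'a::field \<Rightarrow> 'a \<Rightarrow> 'a \<Rightarrow> 'a \<Rightarrow> 'a \<Rightarrow> 'a \<Rightarrow> 'a \<Rightarrow> 'a \<Rightarrow> bool" where
 "tate3_iso A B A' B' \<alpha> \<beta> \<gamma> \<delta> \<longleftrightarrow> \<alpha> \<noteq> 0 \<and> \<alpha> * A' = A + 2*\<gamma> \<and> \<gamma>^2 + \<gamma>*A = 3*\<beta> \<and>
    \<alpha>^3 * B' = B + \<beta>*A + 2*\<delta> \<and> \<gamma>*B + (\<delta> + \<beta>*\<gamma>)*A + 2*\<gamma>*\<delta> = 3*\<beta>^2 \<and>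
    \<delta>*B + \<delta>^2 + \<beta>*\<delta>*A = \<beta>^3"

lemma weier_iso_tate3:
  "weier_iso (A, 0, B, 0, 0) (A', 0, B', 0, 0) \<longleftrightarrow> (\<exists>\<alpha> \<beta> \<gamma> \<delta>. tate3_iso A B A' B' \<alpha> \<beta> \<gamma> \<delta>)"
  unfolding weier_iso_def tate3_iso_def
  by (simp add: eq_diff_eq diff_eq_eq algebra_simps eq_commute[of 0])

lemma hessian_iso_tate3:
  "hessian_iso u v \<longleftrightarrow>
     (\<exists>\<alpha> \<beta> \<gamma> \<delta>. tate3_iso (u + 6) (u^2 + 3*u + 9) (v + 6) (v^2 + 3*v + 9) \<alpha> \<beta> \<gamma> \<delta>)"
  unfolding hessian_iso_def hessian_weier_def by (rule weier_iso_tate3)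

lemma tate3_iso_trans:
  assumes "tate3_iso A B A' B' \<alpha> \<beta> \<gamma> \<delta>" and "tate3_iso A' B' A'' B'' \<alpha>' \<beta>' \<gamma>' \<delta>'"
  shows "tate3_iso A B A'' B'' (\<alpha> * \<alpha>') (\<beta> + \<alpha>^2 * \<beta>') (\<gamma> + \<alpha> * \<gamma>')
           (\<delta> + \<alpha>^3 * \<delta>' + \<alpha>^2 * \<gamma> * \<beta>')"
  using assms unfolding tate3_iso_def
  apply (intro conjI)
  apply simp
  apply algebra+
  done

lemma hessian_iso_trans [trans]:
  assumes "hessian_iso u v" and "hessian_iso v w"
  shows "hessian_iso u w"
  using assms tate3_iso_trans unfolding hessian_iso_tate3 by blast

text \<open>First family of isomorphisms: u \<mapsto> \<zeta> u for a cube root of unity \<zeta>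
  (the curves X^3 + Y^3 + 1 = u XY and X^3 + Y^3 + 1 = \<zeta>u XY are related by X \<mapsto> \<zeta> X).\<close>

lemma hessian_iso_scale:
  fixes u z :: "'a::field"
  assumes z: "z^3 = 1"
  shows "hessian_iso u (z * u)"
proof -
  have "z \<noteq> 0" using z by auto
  define \<beta> where "\<beta> = (z^2 - 1) * (u + 3 + 3*z^2)"
  have "tate3_iso (u + 6) (u^2 + 3*u + 9) (z*u + 6) ((z*u)^2 + 3*(z*u) + 9) (z^2) \<beta> (3*z^2 - 3) (-3*\<beta>)"
    unfolding tate3_iso_def \<beta>_def using z
    apply (intro conjI)
    apply (simp add: \<open>z \<noteq> 0\<close>)
    apply algebra+
    done
  then show ?thesis unfolding hessian_iso_tate3 by blast
qed

text \<open>Second family: given a primitive cube root of unity w (so 3 \<noteq> 0), the fractional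
  transformation x \<mapsto> 3w(x + 6w^2)/(x - 3w^2) is realised by the pure scaling
  X \<mapsto> \<alpha>^2 X, Y \<mapsto> \<alpha>^3 Y with \<alpha> = ((x + 6) + w(3 - x))/9.\<close>

lemma hessian_iso_twist:
  fixes x w :: "'a::field"
  assumes w: "w^2 + w + 1 = 0" and "(3::'a) \<noteq> 0" and "x^3 \<noteq> 27"
  shows "hessian_iso x (3*w*(x + 6*w^2) / (x - 3*w^2))"
proof -
  define D where "D = x - 3*w^2"
  define y where "y = 3*w*(x + 6*w^2) / D"
  define a where "a = (x + 6) + w*(3 - x)"
  have "(w^2)^3 = 1" using w by algebra
  then have "D \<noteq> 0" unfolding D_def using hessian_denominator_ne[OF \<open>x^3 \<noteq> 27\<close>] by blast
  then have yD: "y * D = 3*w*(x + 6*w^2)" unfolding y_def by simp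
  have "a * (y + 6) * D = 9*(x + 6) * D"
  proof -
    have "a * (y + 6) * D = a * (y*D + 6*D)" by algebra
    also have "\<dots> = 9*(x + 6) * D" unfolding yD unfolding D_def a_def using w by algebra
    finally show ?thesis .
  qed
  then have A: "a * (y + 6) = 9*(x + 6)" using \<open>D \<noteq> 0\<close> by simp
  have "a^3 * (y^2 + 3*y + 9) * D^2 = 9^3*(x^2 + 3*x + 9)*D^2"
  proof -
    have "a^3 * (y^2 + 3*y + 9) * D^2 = a^3 * ((y*D)^2 + 3*(y*D)*D + 9*D^2)" by algebra
    also have "\<dots> = 9^3*(x^2 + 3*x + 9)*D^2" unfolding yD unfolding D_def a_def using w by algebra
    finally show ?thesis .
  qed
  then have B: "a^3 * (y^2 + 3*y + 9) = 9^3*(x^2 + 3*x + 9)" using \<open>D \<noteq> 0\<close> by simp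
  have "(9::'a) = 3 * 3" by simp
  then have "(9::'a) \<noteq> 0" using \<open>(3::'a) \<noteq> 0\<close> by (metis mult_eq_0_iff)
  have A': "(a/9) * (y + 6) = x + 6" using A \<open>(9::'a) \<noteq> 0\<close> by (simp add: divide_simps)
  have B': "(a/9)^3 * (y^2 + 3*y + 9) = x^2 + 3*x + 9"
  proof -
    have "(a/9)^3 * (y^2 + 3*y + 9) = (a^3 * (y^2 + 3*y + 9)) / 9^3" by (simp add: power_divide)
    also have "\<dots> = x^2 + 3*x + 9" unfolding B using \<open>(9::'a) \<noteq> 0\<close> by (intro nonzero_mult_div_cancel_left power_not_zero)
    finally show ?thesis .
  qed
  have "a/9 \<noteq> 0" using B' hessian_B_ne[OF \<open>x^3 \<noteq> 27\<close>] by auto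
  then have "tate3_iso (x + 6) (x^2 + 3*x + 9) (y + 6) (y^2 + 3*y + 9) (a/9) 0 0 0"
    unfolding tate3_iso_def using A' B' by simp
  then show ?thesis unfolding hessian_iso_tate3 y_def D_def by blast
qed

text \<open>Composing the two families gives all the transformations of the second kind in the theorem.\<close>

lemma hessian_iso_moebius:
  fixes u z1 z2 w :: "'a::field"
  assumes w: "w^2 + w + 1 = 0" and "(3::'a) \<noteq> 0" and u: "u^3 \<noteq> 27"
    and z1: "z1^3 = 1" and z2: "z2^3 = 1"
  shows "hessian_iso u (3*z1*(u + 6*z2) / (u - 3*z2))"
proof -
  have w3: "w^3 = 1" using w by algebra
  define c where "c = w^2 * z2^2"
  have c3: "c^3 = 1" unfolding c_def using w3 z2 by algebra
  then have "c \<noteq> 0" by auto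
  have "(c*u)^3 \<noteq> 27" using u c3 by (simp add: power_mult_distrib)
  have sub: "c*u - 3*w^2 = c*(u - 3*z2)" and add: "c*u + 6*w^2 = c*(u + 6*z2)"
    unfolding c_def using z2 by algebra+
  have "hessian_iso u (c*u)" using hessian_iso_scale[OF c3] .
  also have "hessian_iso (c*u) (3*w*(u + 6*z2) / (u - 3*z2))"
    using hessian_iso_twist[OF w \<open>3 \<noteq> 0\<close> \<open>(c*u)^3 \<noteq> 27\<close>] \<open>c \<noteq> 0\<close>
    unfolding sub add by (simp add: mult.left_commute[of c] mult.assoc)
  also have "hessian_iso \<dots> ((z1*w^2) * (3*w*(u + 6*z2) / (u - 3*z2)))"
    by (rule hessian_iso_scale) (use z1 w3 in algebra)
  also have "(z1*w^2) * (3*w*(u + 6*z2) / (u - 3*z2)) = 3*z1*(u + 6*z2) / (u - 3*z2)"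
  proof -
    have "z1*w^2 * (3*w*(u + 6*z2)) = 3*z1*(u + 6*z2)" using w3 by algebra
    then show ?thesis by (metis times_divide_eq_right)
  qed
  finally show ?thesis .
qed

definition tate3_c4 :: "'a::field \<Rightarrow> 'a \<Rightarrow> 'a" where
  "tate3_c4 A B = A * (A^3 - 24*B)"

definition tate3_disc :: "'a::field \<Rightarrow> 'a \<Rightarrow> 'a" where
  "tate3_disc A B = B^3 * (A^3 - 27*B)"

lemma tate3_iso_invariants:
  assumes "tate3_iso A B A' B' \<alpha> \<beta> \<gamma> \<delta>"
  shows "\<alpha>^4 * tate3_c4 A' B' = tate3_c4 A B" and "\<alpha>^12 * tate3_disc A' B' = tate3_disc A B"
proof -
  have a1: "\<alpha> * A' = A + 2*\<gamma>" and a2: "\<gamma>^2 + \<gamma>*A = 3*\<beta>" and a3: "\<alpha>^3 * B' = B + \<beta>*A + 2*\<delta>"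
    and a4: "\<gamma>*B + (\<delta> + \<beta>*\<gamma>)*A + 2*\<gamma>*\<delta> = 3*\<beta>^2" and a6: "\<delta>*B + \<delta>^2 + \<beta>*\<delta>*A = \<beta>^3"
    using assms unfolding tate3_iso_def by auto
  have wt2: "\<alpha>^2 * A'^2 = A^2 + 12*\<beta>" using a1 a2 by algebra
  have wt4: "\<alpha>^4 * (A' * B') = A*B + \<beta>*A^2 + 6*\<beta>^2" using a1 a2 a3 a4 by algebra
  have wt6: "\<alpha>^6 * B'^2 = B^2 + 2*\<beta>*A*B + \<beta>^2*A^2 + 4*\<beta>^3" using a3 a6 by algebra
  have wt8: "\<beta> * (3*\<beta>^3 + A^2*\<beta>^2 + 3*A*B*\<beta> + 3*B^2) = 0" using a2 a4 a6 by algebra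
  show "\<alpha>^4 * tate3_c4 A' B' = tate3_c4 A B" unfolding tate3_c4_def using wt2 wt4 by algebra
  show "\<alpha>^12 * tate3_disc A' B' = tate3_disc A B" unfolding tate3_disc_def using wt2 wt4 wt6 wt8 by algebra
qed

text \<open>Hence isomorphic Hessian curves have the same j-invariant: for E_{H,u} one finds
  c4 = u^4 + 216u and \<Delta> = (u^3 - 27)^3.\<close>

lemma hessian_iso_j_invariant:
  fixes u v :: "'a::field"
  assumes "hessian_iso u v"
  shows "(u^4 + 216*u)^3 * (v^3 - 27)^3 = (v^4 + 216*v)^3 * (u^3 - 27)^3"
proof -
  obtain \<alpha> \<beta> \<gamma> \<delta> where iso: "tate3_iso (u + 6) (u^2 + 3*u + 9) (v + 6) (v^2 + 3*v + 9) \<alpha> \<beta> \<gamma> \<delta>"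
    using assms unfolding hessian_iso_tate3 by blast
  have c4: "\<And>x::'a. tate3_c4 (x + 6) (x^2 + 3*x + 9) = x^4 + 216*x"
    and disc: "\<And>x::'a. tate3_disc (x + 6) (x^2 + 3*x + 9) = (x^3 - 27)^3"
    unfolding tate3_c4_def tate3_disc_def by algebra+
  have "(u^4 + 216*u)^3 * (v^3 - 27)^3 = (\<alpha>^4 * (v^4 + 216*v))^3 * (v^3 - 27)^3"
    using tate3_iso_invariants(1)[OF iso] unfolding c4 by simp
  also have "\<dots> = (v^4 + 216*v)^3 * (\<alpha>^12 * (v^3 - 27)^3)" by algebra
  also have "\<dots> = (v^4 + 216*v)^3 * (u^3 - 27)^3"
    using tate3_iso_invariants(2)[OF iso] unfolding disc by simp
  finally show ?thesis .
qed

lemma hessian_j_factorization: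
  fixes u v w :: "'a::field"
  assumes "w^2 + w + 1 = 0"
  shows "(u^4 + 216*u)^3 * (v^3 - 27)^3 - (v^4 + 216*v)^3 * (u^3 - 27)^3 =
    (u^3 - v^3) * (v^3*(u - 3)^3 - 27*(u + 6)^3) * (v^3*(u - 3*w)^3 - 27*(u + 6*w)^3)
      * (v^3*(u - 3*w^2)^3 - 27*(u + 6*w^2)^3)"
  using assms by algebra

lemma moebius_of_factor:
  fixes u v z w :: "'a::field"
  assumes w: "w^2 + w + 1 = 0" and u: "u^3 \<noteq> 27" and z: "z^3 = 1"
    and "v^3 * (u - 3*z)^3 = 27 * (u + 6*z)^3"
  shows "\<exists>\<zeta>. \<zeta>^3 = 1 \<and> v = 3*\<zeta>*(u + 6*z) / (u - 3*z)"
proof -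
  have "(v * (u - 3*z))^3 = (3 * (u + 6*z))^3" using assms(4) by algebra
  then obtain \<zeta> where "\<zeta>^3 = 1" and "v * (u - 3*z) = \<zeta> * (3 * (u + 6*z))"
    using cubes_eq_imp_root_of_unity[OF w] by blast
  moreover have "u - 3*z \<noteq> 0" using hessian_denominator_ne[OF u z] .
  ultimately show ?thesis by (auto simp: field_simps)
qed

lemma hessian_iso_imp_moebius:
  fixes u v w :: "'a::field"
  assumes w: "w^2 + w + 1 = 0" and u: "u^3 \<noteq> 27" and "hessian_iso u v"
  shows "\<exists>\<zeta>1 \<zeta>2. \<zeta>1^3 = 1 \<and> \<zeta>2^3 = 1 \<and> (v = \<zeta>1 * u \<or> v = 3*\<zeta>1*(u + 6*\<zeta>2) / (u - 3*\<zeta>2))"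
proof -
  let ?F = "\<lambda>z. v^3 * (u - 3*z)^3 - 27 * (u + 6*z)^3"
  have "(u^3 - v^3) * ?F 1 * ?F w * ?F (w^2) = 0"
    using hessian_iso_j_invariant[OF \<open>hessian_iso u v\<close>] hessian_j_factorization[OF w, of u v] by simp
  moreover have "w^3 = 1" and "(w^2)^3 = 1" using w by algebra+
  ultimately consider "v^3 = u^3" | z where "z^3 = 1" and "?F z = 0"
    by (metis eq_iff_diff_eq_0 mult_eq_0_iff power_one)
  then show ?thesis
  proof cases
    case 1
    then show ?thesis using cubes_eq_imp_root_of_unity[OF w] by blast
  next
    case (2 z)
    then obtain \<zeta> where "\<zeta>^3 = 1" and "v = 3*\<zeta>*(u + 6*z) / (u - 3*z)"
      using moebius_of_factor[OF w u] by auto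
    then show ?thesis using \<open>z^3 = 1\<close> by blast
  qed
qed

text \<open>First the case of a pure scaling \<alpha>: the quadratic cofactor of \<alpha> - 1 can
  only vanish if a primitive cube root of unity exists.\<close>

lemma hessian_scaling_rigid:
  fixes u v \<alpha> :: "'a::field"
  assumes u: "u^3 \<noteq> 27" and A: "\<alpha> * (v + 6) = u + 6"
    and B: "\<alpha>^3 * (v^2 + 3*v + 9) = u^2 + 3*u + 9"
  shows "v = u \<or> (\<exists>z::'a. z^3 = 1 \<and> z \<noteq> 1)"
proof (cases "\<alpha> = 1")
  case True
  then show ?thesis using A by simp
next
  case False
  let ?Q = "27*\<alpha>^2 - 9*(u + 3)*\<alpha> + (u^2 + 3*u + 9)"
  have "(\<alpha> - 1) * ?Q = 0" using A B by algebra
  then have Q: "?Q = 0" using False by simp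
  have three: "(3::'a) \<noteq> 0"
  proof
    assume three: "(3::'a) = 0"
    have "?Q = u^2 + 3 * (9*\<alpha>^2 - 3*(u + 3)*\<alpha> + u + 3)" by algebra
    also have "\<dots> = u^2" using three by simp
    finally have "u^2 = 0" using Q by metis
    then have "u = 0" by simp
    then show False using u char_three_numerals(2)[OF three] by simp
  qed
  have "u - 3 \<noteq> 0" using hessian_denominator_ne[OF u, of 1] by simp
  define w where "w = (9*\<alpha> - 3 - 2*u) / (u - 3)"
  have "w * (u - 3) = 9*\<alpha> - 3 - 2*u" unfolding w_def using \<open>u - 3 \<noteq> 0\<close> by simp
  then have "(u - 3)^2 * (w^2 + w + 1) = 3 * ?Q" by algebra
  also have "\<dots> = 0" unfolding Q by simp
  finally have "w^2 + w + 1 = 0" using \<open>u - 3 \<noteq> 0\<close> by simp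
  then show ?thesis using three nontrivial_cube_root_iff by blast
qed

lemma hessian_translation_rigid:
  fixes u \<beta> \<gamma> \<delta> :: "'a::field"
  defines "A \<equiv> u + 6" and "B \<equiv> u^2 + 3*u + 9"
  assumes u: "u^3 \<noteq> 27" and "\<beta> \<noteq> 0"
    and a2: "\<gamma>^2 + \<gamma>*A = 3*\<beta>" and a4: "\<gamma>*B + (\<delta> + \<beta>*\<gamma>)*A + 2*\<gamma>*\<delta> = 3*\<beta>^2"
    and a6: "\<delta>*B + \<delta>^2 + \<beta>*\<delta>*A = \<beta>^3"
  shows "\<exists>z::'a. z^3 = 1 \<and> z \<noteq> 1"
proof -
  let ?\<psi> = "3*\<beta>^3 + A^2*\<beta>^2 + 3*A*B*\<beta> + 3*B^2"
  have "\<beta> * ?\<psi> = 0" using a2 a4 a6 by algebra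
  then have \<psi>: "?\<psi> = 0" using \<open>\<beta> \<noteq> 0\<close> by simp
  have three: "(3::'a) \<noteq> 0"
  proof
    assume three: "(3::'a) = 0"
    have "?\<psi> = A^2*\<beta>^2 + 3*(\<beta>^3 + A*B*\<beta> + B^2)" by algebra
    also have "\<dots> = A^2*\<beta>^2" using three by simp
    finally have "A = 0" using \<psi> \<open>\<beta> \<noteq> 0\<close> by simp
    then have "u = 0" using char_three_numerals(1)[OF three] unfolding A_def by simp
    then show False using u char_three_numerals(2)[OF three] by simp
  qed
  have "u - 3 \<noteq> 0" using hessian_denominator_ne[OF u, of 1] by simp
  define t where "t = 3*B + A*\<beta>"
  have t3: "t^3 = ((u - 3)*\<beta>)^3" using \<psi> unfolding t_def A_def B_def by algebra
  show ?thesis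
  proof (cases "t = (u - 3)*\<beta>")
    case False
    have "(u - 3)*\<beta> \<noteq> 0" using \<open>u - 3 \<noteq> 0\<close> \<open>\<beta> \<noteq> 0\<close> by simp
    then have "(t / ((u - 3)*\<beta>))^3 = 1" and "t / ((u - 3)*\<beta>) \<noteq> 1"
      using t3 False by (simp_all add: power_divide)
    then show ?thesis by blast
  next
    case True
    then have "3*B = -9*\<beta>" unfolding t_def A_def B_def by algebra
    then have B\<beta>: "3*\<beta> = -B" using three by algebra
    have q: "27*\<delta>^2 - 9*B*(u + 3)*\<delta> + B^3 = 0"
    proof -
      have "27*\<beta>^3 = 27*(\<delta>*B + \<delta>^2 + \<beta>*\<delta>*A)" using a6 by simp
      then show ?thesis using B\<beta> unfolding A_def B_def by algebra
    qed
    have "B - \<delta> \<noteq> 0"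
    proof
      assume "B - \<delta> = 0"
      then have "B^2 * (u - 3)^2 = 0" using q unfolding B_def by algebra
      then show False using hessian_B_ne[OF u] \<open>u - 3 \<noteq> 0\<close> unfolding B_def by simp
    qed
    define w where "w = (B*u - 3*\<delta>) / (3*(B - \<delta>))"
    have "w * (3*(B - \<delta>)) = B*u - 3*\<delta>" unfolding w_def using \<open>B - \<delta> \<noteq> 0\<close> three by simp
    then have "(3*(B - \<delta>))^2 * (w^2 + w + 1) = 27*\<delta>^2 - 9*B*(u + 3)*\<delta> + B^3"
      unfolding B_def by algebra
    also have "\<dots> = 0" by (rule q)
    finally have "w^2 + w + 1 = 0" using \<open>B - \<delta> \<noteq> 0\<close> three by simp
    then show ?thesis using three nontrivial_cube_root_iff by blast
  qed
qed

text \<open>Without a primitive cube root of unity only u = v remains: when \<beta> = 0 the remaining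
  translation is trivial or the negation map (\<gamma>, \<delta>) = (-A, -B), so the isomorphism
  is a scaling by \<alpha> or -\<alpha>.\<close>

lemma hessian_iso_rigid:
  fixes u v :: "'a::field"
  assumes u: "u^3 \<noteq> 27" and "hessian_iso u v"
  shows "v = u \<or> (\<exists>z::'a. z^3 = 1 \<and> z \<noteq> 1)"
proof -
  define A where "A = u + 6"
  define B where "B = u^2 + 3*u + 9"
  obtain \<alpha> \<beta> \<gamma> \<delta> where iso: "tate3_iso A B (v + 6) (v^2 + 3*v + 9) \<alpha> \<beta> \<gamma> \<delta>"
    using \<open>hessian_iso u v\<close> unfolding hessian_iso_tate3 A_def B_def by blast
  then have a1: "\<alpha> * (v + 6) = A + 2*\<gamma>" and a2: "\<gamma>^2 + \<gamma>*A = 3*\<beta>"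
    and a3: "\<alpha>^3 * (v^2 + 3*v + 9) = B + \<beta>*A + 2*\<delta>"
    and a4: "\<gamma>*B + (\<delta> + \<beta>*\<gamma>)*A + 2*\<gamma>*\<delta> = 3*\<beta>^2" and a6: "\<delta>*B + \<delta>^2 + \<beta>*\<delta>*A = \<beta>^3"
    unfolding tate3_iso_def by auto
  have "B \<noteq> 0" unfolding B_def using hessian_B_ne[OF u] .
  show ?thesis
  proof (cases "\<beta> = 0")
    case False
    then show ?thesis using hessian_translation_rigid[OF u False] a2 a4 a6 unfolding A_def B_def by blast
  next
    case True
    then have "\<delta> * (\<delta> + B) = 0" using a6 by algebra
    then consider "\<delta> = 0" | "\<delta> = -B" by (auto simp: eq_neg_iff_add_eq_0)
    then show ?thesis
    proof cases
      case 1
      then have "\<gamma> = 0" using a4 True \<open>B \<noteq> 0\<close> by simp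
      then show ?thesis using hessian_scaling_rigid[OF u, of \<alpha>] a1 a3 True 1 unfolding A_def B_def by simp
    next
      case 2
      then have "B * (\<gamma> + A) = 0" using a4 True by algebra
      then have "\<gamma> = -A" using \<open>B \<noteq> 0\<close> by (simp add: eq_neg_iff_add_eq_0)
      then have "(-\<alpha>) * (v + 6) = u + 6" and "(-\<alpha>)^3 * (v^2 + 3*v + 9) = u^2 + 3*u + 9"
        using a1 a3 True 2 unfolding A_def B_def by algebra+
      then show ?thesis using hessian_scaling_rigid[OF u] by blast
    qed
  qed
qed

lemma finite_field_fermat:
  fixes x :: "'a::{finite, field}"
  assumes "x \<noteq> 0"
  shows "x ^ (card (UNIV :: 'a set) - 1) = 1"
proof -
  have "(\<Prod>y\<in>UNIV - {0}. x * y) = (\<Prod>y\<in>UNIV - {0::'a}. y)"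
    by (rule prod.reindex_bij_witness[of _ "\<lambda>y. y / x" "\<lambda>y. x * y"]) (use assms in auto)
  then have "x ^ card (UNIV - {0::'a}) * (\<Prod>y\<in>UNIV - {0}. y) = (\<Prod>y\<in>UNIV - {0::'a}. y)"
    by (simp add: prod.distrib)
  then show ?thesis by (simp add: card_Diff_singleton)
qed

text \<open>If a finite field of order q contains a primitive cube root of unity z, then z^(q-1) = 1
  forces the order 3 of z to divide q - 1.\<close>

lemma card_mod_3_of_cube_root:
  fixes z :: "'a::{finite, field}"
  assumes z: "z^3 = 1" "z \<noteq> 1"
  shows "card (UNIV :: 'a set) mod 3 = 1"
proof -
  define q where "q = card (UNIV :: 'a set)"
  have "card {0::'a, 1} \<le> q" unfolding q_def by (rule card_mono) simp_all
  then have "q \<ge> 2" by simp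
  have "z \<noteq> 0" using z by auto
  then have "z^(q - 1) = 1" using finite_field_fermat[of z] unfolding q_def by simp
  also have "z^(q - 1) = (z^3)^((q - 1) div 3) * z^((q - 1) mod 3)"
    by (simp add: power_mult[symmetric] power_add[symmetric])
  finally have r: "z^((q - 1) mod 3) = 1" using z by simp
  have "(q - 1) mod 3 = 0"
  proof (rule ccontr)
    assume "(q - 1) mod 3 \<noteq> 0"
    then consider "(q - 1) mod 3 = 1" | "(q - 1) mod 3 = 2" by linarith
    then show False
    proof cases
      case 1
      then show False using r z by simp
    next
      case 2
      then have "z^2 = 1" using r by simp
      then have "z^3 = z" by (simp add: power3_eq_cube power2_eq_square)
      then show False using z by simp
    qed
  qed
  then show ?thesis using \<open>q \<ge> 2\<close> unfolding q_def by presburger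
qed

text \<open>Conversely, if q = 3m + 1 and 1 were the only cube root of unity, every nonzero element x
  would satisfy x^m = 1, giving q - 1 = 3m roots of the polynomial X^m - 1 of degree m.\<close>

lemma cube_root_of_card_mod_3:
  assumes "card (UNIV :: 'a::{finite, field} set) mod 3 = 1"
  shows "\<exists>z::'a. z^3 = 1 \<and> z \<noteq> 1"
proof (rule ccontr)
  assume no_root: "\<not> (\<exists>z::'a. z^3 = 1 \<and> z \<noteq> 1)"
  define q where "q = card (UNIV :: 'a set)"
  have "card {0::'a, 1} \<le> q" unfolding q_def by (rule card_mono) simp_all
  define m where "m = (q - 1) div 3"
  have qm: "q - 1 = 3*m" and "m \<ge> 1"
    unfolding m_def using assms \<open>card {0::'a, 1} \<le> q\<close> unfolding q_def by simp_all presburger+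
  define p :: "'a poly" where "p = monom 1 m + (- 1)"
  have "degree p = m"
    unfolding p_def using \<open>m \<ge> 1\<close> by (subst degree_add_eq_left) (simp_all add: degree_monom_eq)
  then have "p \<noteq> 0" using \<open>m \<ge> 1\<close> by auto
  have "UNIV - {0} \<subseteq> {x::'a. poly p x = 0}"
  proof
    fix x :: 'a
    assume "x \<in> UNIV - {0}"
    then have "(x^m)^3 = 1" using finite_field_fermat[of x] qm unfolding q_def
      by (simp add: power_mult[symmetric] mult.commute)
    then show "x \<in> {x. poly p x = 0}" using no_root unfolding p_def by (auto simp: poly_monom)
  qed
  then have "card (UNIV - {0::'a}) \<le> card {x. poly p x = 0}" by (intro card_mono) auto
  also have "\<dots> \<le> m" using card_poly_roots_bound[OF \<open>p \<noteq> 0\<close>] \<open>degree p = m\<close> by simp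
  finally show False using qm \<open>m \<ge> 1\<close> unfolding q_def by (simp add: card_Diff_singleton)
qed

theorem mainTheorem10:
  fixes u v :: "'a::{finite, field}"
  assumes "u^3 \<noteq> 27" and "v^3 \<noteq> 27"
  shows "hessian_iso u v \<longleftrightarrow>
    (\<exists>\<zeta>1 \<zeta>2 :: 'a. \<zeta>1^3 = 1 \<and> \<zeta>2^3 = 1 \<and>
       (v = \<zeta>1 * u \<or>
        (card (UNIV :: 'a set) mod 3 = 1 \<and> v = 3 * \<zeta>1 * (u + 6 * \<zeta>2) / (u - 3 * \<zeta>2))))"
proof (cases "card (UNIV :: 'a set) mod 3 = 1")
  case True
  then obtain w :: 'a where "w^3 = 1" and "w \<noteq> 1" using cube_root_of_card_mod_3 by blast
  then have w: "w^2 + w + 1 = 0" and three: "(3::'a) \<noteq> 0" using nontrivial_cube_root_iff by blast+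
  have "hessian_iso u v \<longleftrightarrow> (\<exists>\<zeta>1 \<zeta>2 :: 'a. \<zeta>1^3 = 1 \<and> \<zeta>2^3 = 1 \<and>
          (v = \<zeta>1 * u \<or> v = 3 * \<zeta>1 * (u + 6 * \<zeta>2) / (u - 3 * \<zeta>2)))"
    using hessian_iso_imp_moebius[OF w assms(1)] hessian_iso_scale
      hessian_iso_moebius[OF w three assms(1)] by blast
  then show ?thesis using True by simp
next
  case False
  then have no_root: "\<And>z::'a. z^3 = 1 \<Longrightarrow> z = 1" using card_mod_3_of_cube_root by blast
  have "hessian_iso u v \<longleftrightarrow> v = u"
    using hessian_iso_rigid[OF assms(1)] hessian_iso_scale[of 1 u] no_root by auto
  then show ?thesis using False no_root by (metis mult_1 power_one)
qed

end
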